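(* Let $n=p_1^{\alpha_1}p_2^{\alpha_2}\cdots p_r^{\alpha_r}$ be a positive integer, where the $p_i$ are primes with $2<p_1<p_2<\cdots<p_r=p$ and $\alpha_i>0$ for each $1\le i\le r$. If $p\ge 37$, then $$\psi(C_n)\ \ge\ h'(12)\,\frac{n^2}{p+1},$$ where $h'(12)=37\cdot\prod_{i=2}^{11}\frac{q_i}{q_i+1}=37\cdot\frac{3}{4}\cdot\frac{5}{6}\cdot\frac{7}{8}\cdot\frac{11}{12}\cdot\frac{13}{14}\cdot\frac{17}{18}\cdot\frac{19}{20}\cdot\frac{23}{24}\cdot\frac{29}{30}\cdot\frac{31}{32}$.
   Context: For a finite group $G$, $\psi(G)=\sum_{g\in G} o(g)$, where $o(g)$ is the order of $g$; $C_n$ is the cyclic group of order $n$. Let $2=q_1<q_2<q_3<\cdots$ be the list of all primes in increasing order. Define $f'(1)=1$, $f'(r)=\prod_{i=2}^{r}\frac{q_i}{q_i+1}$ for $r\ge 2$, and $h'(2)=3$, $h'(s)=f'(s-1)\,q_s$ for $s\ge 2$; in particular $q_{12}=37$. *)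

theory Defs
  imports Complex_Main "HOL-Algebra.Elementary_Groups" "HOL-Algebra.Multiplicative_Group" "HOL-Computational_Algebra.Primes"
    "HOL-Library.Infinite_Set"
begin

definition psi :: "('a, 'b) monoid_scheme \<Rightarrow> nat" where
  "psi G = (\<Sum>g\<in>carrier G. group.ord G g)"

abbreviation cyclic_group_C :: "nat \<Rightarrow> int monoid" where
  "cyclic_group_C n \<equiv> integer_mod_group n"

text \<open>q i = i-th prime (1-indexed): q 1 = 2, q 2 = 3, ...\<close>
definition q :: "nat \<Rightarrow> nat" where
  "q i = enumerate {p::nat. prime p} (i - 1)"

definition f' :: "nat \<Rightarrow> real" where
  "f' r = (if r \<le> 1 then 1 else (\<Prod>i\<in>{2..r}. real (q i) / (real (q i) + 1)))"

definition h' :: "nat \<Rightarrow> real" where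
  "h' s = (if s = 2 then 3 else f' (s - 1) * real (q s))"

end

theory Submission
  imports Defs
begin

text \<open>
  The element of \<open>\<int>/n\<close> represented by \<open>k\<close> has order \<open>n div gcd k n\<close>, so \<open>\<psi>(C\<^sub>n)\<close> is a
  multiplicative function of \<open>n\<close> (Chinese remainder theorem). On prime powers
  \<open>(p + 1) \<psi>(C\<^bsub>p^a\<^esub>) = p\<^bsup>2a+1\<^esup> + 1 > p\<^bsup>2a\<^esup> p\<close>, hence
  \<open>\<psi>(C\<^sub>n) \<ge> n\<^sup>2 \<Prod>\<^bsub>r | n\<^esub> r/(r+1)\<close>. All factors \<open>r/(r+1)\<close> lie in \<open>[0,1]\<close>, so this product is at
  least the one over all odd primes \<open>\<le> p\<close>; the primes in \<open>[37, p]\<close> contribute at least the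
  telescoping product \<open>\<Prod>\<^bsub>37 \<le> x \<le> p\<^esub> x/(x+1) = 37/(p+1)\<close>, and the odd primes below 37
  contribute exactly \<open>h'(12)/37\<close>.
\<close>

section \<open>The order sum of a cyclic group\<close>

definition cyclic_order_sum :: "nat \<Rightarrow> nat" where
  "cyclic_order_sum n = (\<Sum>k<n. n div gcd k n)"

lemma ord_integer_mod_group:
  assumes "k < n"
  shows "group.ord (integer_mod_group n) (int k) = n div gcd k n"
proof -
  interpret G: group "integer_mod_group n" by simp
  have carrier: "int k \<in> carrier (integer_mod_group n)"
    using assms by (simp add: carrier_integer_mod_group)
  have "pow (integer_mod_group n) (int k) m = \<one>\<^bsub>integer_mod_group n\<^esub> \<longleftrightarrow> n div gcd k n dvd m"
    for m :: nat
  proof -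
    have "pow (integer_mod_group n) (int k) m = \<one>\<^bsub>integer_mod_group n\<^esub> \<longleftrightarrow> n dvd m * k"
      by (metis pow_integer_mod_group one_integer_mod_group of_nat_mult of_nat_dvd_iff
          dvd_eq_mod_eq_0)
    also have "\<dots> \<longleftrightarrow> n div gcd k n dvd m"
      using assms by (metis (no_types, lifting) div_dvd_div dvd_triv_right gcd_eq_0_iff
          gcd_mult_distrib_nat gcd_nat.bounded_iff gcd_unique_nat
          nonzero_mult_div_cancel_right not_less_zero)
    finally show ?thesis .
  qed
  then show ?thesis
    using G.ord_unique[OF carrier] by blast
qed

lemma psi_integer_mod_group:
  assumes "n > 0"
  shows "psi (integer_mod_group n) = cyclic_order_sum n"
proof -
  have "carrier (integer_mod_group n) = int ` {..<n}"
    using assms by (simp add: carrier_integer_mod_group image_int_atLeastLessThan lessThan_atLeast0)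
  then have "psi (integer_mod_group n) = (\<Sum>k<n. group.ord (integer_mod_group n) (int k))"
    by (simp add: psi_def sum.reindex)
  also have "\<dots> = cyclic_order_sum n"
    unfolding cyclic_order_sum_def by (intro sum.cong) (auto simp: ord_integer_mod_group)
  finally show ?thesis .
qed

section \<open>Multiplicativity\<close>

lemma gcd_mult_coprime:
  fixes k a b :: nat
  assumes "coprime a b"
  shows "gcd k (a * b) = gcd k a * gcd k b"
proof (rule dvd_antisym)
  obtain d1 d2 where d: "gcd k (a * b) = d1 * d2" "d1 dvd a" "d2 dvd b"
    using division_decomp[of "gcd k (a * b)" a b] by auto
  then have "d1 dvd k" "d2 dvd k"
    by (metis dvd_triv_left gcd_dvd1 dvd_trans, metis dvd_triv_right gcd_dvd1 dvd_trans)
  then show "gcd k (a * b) dvd gcd k a * gcd k b"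
    using d by (simp add: mult_dvd_mono)
next
  have "coprime (gcd k a) (gcd k b)"
    using assms by (rule coprime_imp_coprime) (meson dvd_trans gcd_dvd2 gcd_dvd1)+
  then have "gcd k a * gcd k b dvd k"
    by (simp add: divides_mult)
  moreover have "gcd k a * gcd k b dvd a * b"
    by (simp add: mult_dvd_mono)
  ultimately show "gcd k a * gcd k b dvd gcd k (a * b)"
    by simp
qed

lemma mod_mult_eqI_coprime:
  fixes a b x y :: nat
  assumes "coprime a b" "x mod a = y mod a" "x mod b = y mod b"
  shows "x mod (a * b) = y mod (a * b)"
proof -
  have "int a dvd int x - int y" "int b dvd int x - int y"
    using assms(2,3) by (metis of_nat_mod mod_eq_dvd_iff)+
  then have "int a * int b dvd int x - int y"
    using assms(1) by (simp add: divides_mult)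
  then show ?thesis
    by (metis mod_eq_dvd_iff of_nat_mod of_nat_mult of_nat_eq_iff)
qed

lemma bij_betw_mod_pair:
  fixes a b :: nat
  assumes "coprime a b"
  shows "bij_betw (\<lambda>k. (k mod a, k mod b)) {..<a * b} ({..<a} \<times> {..<b})"
proof -
  let ?h = "\<lambda>k. (k mod a, k mod b)"
  have inj: "inj_on ?h {..<a * b}"
    by (rule inj_onI) (metis lessThan_iff mod_less mod_mult_eqI_coprime[OF assms] prod.inject)
  show ?thesis
  proof (cases "a = 0 \<or> b = 0")
    case True
    then show ?thesis by (auto simp: bij_betw_def)
  next
    case False
    then have "?h ` {..<a * b} \<subseteq> {..<a} \<times> {..<b}"
      by auto
    moreover have "card (?h ` {..<a * b}) = card ({..<a} \<times> {..<b})"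
      using card_image[OF inj] by (simp add: card_cartesian_product)
    ultimately have "?h ` {..<a * b} = {..<a} \<times> {..<b}"
      by (intro card_subset_eq) auto
    then show ?thesis
      using inj by (simp add: bij_betw_def)
  qed
qed

lemma cyclic_order_sum_mult:
  fixes a b :: nat
  assumes "coprime a b" "a > 0" "b > 0"
  shows "cyclic_order_sum (a * b) = cyclic_order_sum a * cyclic_order_sum b"
proof -
  define F where "F = (\<lambda>(i, j). (a div gcd i a) * (b div gcd j b))"
  have "cyclic_order_sum (a * b) = (\<Sum>k<a * b. F (k mod a, k mod b))"
    unfolding cyclic_order_sum_def
  proof (intro sum.cong refl)
    fix k
    have "gcd k a = gcd (k mod a) a" "gcd k b = gcd (k mod b) b"
      using assms(2,3) by simp_all
    then show "a * b div gcd k (a * b) = F (k mod a, k mod b)"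
      unfolding F_def gcd_mult_coprime[OF assms(1)] by (simp add: div_mult_div_if_dvd)
  qed
  also have "\<dots> = sum F ({..<a} \<times> {..<b})"
    using sum.reindex_bij_betw[OF bij_betw_mod_pair[OF assms(1)], of F] by simp
  also have "\<dots> = cyclic_order_sum a * cyclic_order_sum b"
    unfolding F_def cyclic_order_sum_def by (simp add: sum.cartesian_product sum_product)
  finally show ?thesis .
qed

section \<open>Prime powers\<close>

lemma sum_lessThan_mult_blocks:
  fixes f :: "nat \<Rightarrow> 'a :: comm_monoid_add"
  shows "(\<Sum>k<p * N. f k) = (\<Sum>j<N. \<Sum>r<p. f (j * p + r))"
proof -
  have block: "sum f {j * p..<j * p + p} = (\<Sum>r<p. f (j * p + r))" for j
    using sum.shift_bounds_nat_ivl[of f 0 "j * p" p]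
    by (simp add: lessThan_atLeast0 add.commute)
  show ?thesis
    using sum.nat_group[of f p N] by (simp add: block mult.commute)
qed

text \<open>
  Cut \<open>{..<p\<^bsup>a+1\<^esup>}\<close> into blocks of length \<open>p\<close>: the first entry \<open>j p\<close> of block \<open>j\<close> contributes
  like \<open>j\<close> in \<open>{..<p\<^sup>a}\<close>, the other \<open>p - 1\<close> entries are prime to \<open>p\<close> and contribute \<open>p\<^bsup>a+1\<^esup>\<close> each.
\<close>
lemma cyclic_order_sum_prime_power_Suc:
  assumes "prime p"
  shows "cyclic_order_sum (p ^ Suc a) = cyclic_order_sum (p ^ a) + p ^ a * ((p - 1) * p ^ Suc a)"
proof -
  define N M where "N = p ^ a" and "M = p ^ Suc a"
  have "p > 0" "N > 0" and M: "M = p * N"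
    using assms prime_gt_0_nat by (auto simp: N_def M_def)
  have block: "(\<Sum>r<p. M div gcd (j * p + r) M) = N div gcd j N + (p - 1) * M" for j
  proof -
    obtain p' where p': "p = Suc p'"
      using \<open>p > 0\<close> by (cases p) auto
    have "(\<Sum>r<p. M div gcd (j * p + r) M)
        = M div gcd (j * p) M + (\<Sum>i<p'. M div gcd (j * p + Suc i) M)"
      unfolding p' by (subst sum.lessThan_Suc_shift) simp
    moreover have "gcd (j * p) M = p * gcd j N"
      unfolding M by (simp add: gcd_mult_distrib_nat mult.commute)
    then have "M div gcd (j * p) M = N div gcd j N"
      using \<open>p > 0\<close> unfolding M by simp
    moreover have "M div gcd (j * p + Suc i) M = M" if "i < p'" for i
    proof -
      have "Suc i < p"
        using that p' by simp
      then have "(j * p + Suc i) mod p = Suc i"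
        by (metis mod_less mod_mult_self3)
      then have "\<not> p dvd j * p + Suc i"
        by (simp add: dvd_eq_mod_eq_0)
      then have "coprime (j * p + Suc i) M"
        unfolding M_def using prime_imp_power_coprime[OF assms] by blast
      then show ?thesis by simp
    qed
    ultimately show ?thesis
      using p' by simp
  qed
  have "cyclic_order_sum M = (\<Sum>j<N. \<Sum>r<p. M div gcd (j * p + r) M)"
    unfolding cyclic_order_sum_def M by (rule sum_lessThan_mult_blocks)
  also have "\<dots> = cyclic_order_sum N + N * ((p - 1) * M)"
    unfolding block cyclic_order_sum_def by (simp add: sum.distrib)
  finally show ?thesis
    unfolding M_def N_def .
qed

lemma cyclic_order_sum_prime_power:
  assumes "prime p"
  shows "real (cyclic_order_sum (p ^ a)) * (real p + 1) = real p ^ (2 * a + 1) + 1"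
proof (induction a)
  case 0
  then show ?case by (simp add: cyclic_order_sum_def)
next
  case (Suc a)
  have "p \<ge> 1"
    using assms prime_gt_0_nat by (simp add: Suc_leI)
  then have "real (cyclic_order_sum (p ^ Suc a))
      = real (cyclic_order_sum (p ^ a)) + real p ^ a * (real p - 1) * real p ^ Suc a"
    unfolding cyclic_order_sum_prime_power_Suc[OF assms] by simp
  also have "real p ^ a * (real p - 1) * real p ^ Suc a = real p ^ (2 * a + 1) * (real p - 1)"
    by (simp add: power_add mult_2)
  finally have recurrence: "real (cyclic_order_sum (p ^ Suc a))
      = real (cyclic_order_sum (p ^ a)) + real p ^ (2 * a + 1) * (real p - 1)" .
  have "real (cyclic_order_sum (p ^ Suc a)) * (real p + 1)
      = real (cyclic_order_sum (p ^ a)) * (real p + 1)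
        + real p ^ (2 * a + 1) * (real p - 1) * (real p + 1)"
    unfolding recurrence by (simp only: distrib_right)
  also have "\<dots> = real p ^ (2 * a + 1) + 1 + real p ^ (2 * a + 1) * (real p - 1) * (real p + 1)"
    by (simp only: Suc.IH)
  also have "\<dots> = real p ^ (2 * Suc a + 1) + 1"
    by (simp add: algebra_simps power_add)
  finally show ?case .
qed

lemma cyclic_order_sum_prime_power_ge:
  assumes "prime p"
  shows "real (p ^ a) ^ 2 * (real p / (real p + 1)) \<le> real (cyclic_order_sum (p ^ a))"
proof -
  have "real (p ^ a) ^ 2 * real p = real p ^ (2 * a + 1)"
    by (simp add: power_add power_mult[symmetric] mult.commute)
  also have "\<dots> \<le> real (cyclic_order_sum (p ^ a)) * (real p + 1)"
    using cyclic_order_sum_prime_power[OF assms] by simp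
  finally show ?thesis
    by (simp add: divide_le_eq add_pos_nonneg)
qed

lemma cyclic_order_sum_ge:
  assumes "n > 0"
  shows "real n ^ 2 * (\<Prod>r\<in>prime_factors n. real r / (real r + 1)) \<le> real (cyclic_order_sum n)"
  using assms
proof (induction n rule: less_induct)
  case (less n)
  show ?case
  proof (cases "n = 1")
    case True
    then show ?thesis by (simp add: cyclic_order_sum_def)
  next
    case False
    then have "\<exists>p\<in>#prime_factorization n. True"
      using less.prems prime_factor_nat by (auto simp: in_prime_factors_iff)
    then obtain p k m where pk: "prime p" "\<not> p dvd m" "0 < k" "n = p ^ k * m"
      using divide_out_primepow_ex[of n "\<lambda>_. True"] less.prems by blast
    have "m > 0"
      using pk less.prems by (cases m) auto
    have "p ^ k > 1"
      using pk(1,3) prime_gt_1_nat one_less_power by blast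
    then have "m < n"
      using pk(4) \<open>m > 0\<close> by simp
    have cop: "coprime (p ^ k) m"
      using prime_imp_power_coprime[OF pk(1,2)] by (simp add: coprime_commute)
    have "prime_factors n = insert p (prime_factors m)" "p \<notin> prime_factors m"
      using pk \<open>m > 0\<close> by (auto simp: prime_factors_product prime_factorization_prime_power)
    then have factors: "(\<Prod>r\<in>prime_factors n. real r / (real r + 1))
        = real p / (real p + 1) * (\<Prod>r\<in>prime_factors m. real r / (real r + 1))"
      by simp
    have "real n ^ 2 * (\<Prod>r\<in>prime_factors n. real r / (real r + 1))
        = (real (p ^ k) ^ 2 * (real p / (real p + 1)))
          * (real m ^ 2 * (\<Prod>r\<in>prime_factors m. real r / (real r + 1)))"
      unfolding factors by (simp add: pk(4) power_mult_distrib)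
    also have "\<dots> \<le> real (cyclic_order_sum (p ^ k)) * real (cyclic_order_sum m)"
      using cyclic_order_sum_prime_power_ge[OF pk(1)] less.IH[OF \<open>m < n\<close> \<open>m > 0\<close>]
      by (rule mult_mono) (simp_all add: prod_nonneg)
    also have "\<dots> = real (cyclic_order_sum n)"
      using cyclic_order_sum_mult[OF cop _ \<open>m > 0\<close>] prime_gt_0_nat[OF pk(1)] pk(4) by simp
    finally show ?thesis .
  qed
qed

section \<open>The product over odd primes\<close>

lemma prod_ratio_telescope:
  assumes "1 \<le> a" "a \<le> b"
  shows "(\<Prod>x\<in>{a..<b}. real x / (real x + 1)) = real a / real b"
  using assms(2)
proof (induction b rule: dec_induct)
  case base
  then show ?case using assms by simp
next
  case (step c)
  then have "{a..<Suc c} = insert c {a..<c}"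
    by auto
  then show ?case
    using step assms by (simp add: field_simps)
qed

lemma prod_le_prod_subset:
  fixes f :: "'a \<Rightarrow> real"
  assumes "finite A" "B \<subseteq> A" "\<And>x. x \<in> A \<Longrightarrow> 0 \<le> f x \<and> f x \<le> 1"
  shows "prod f A \<le> prod f B"
proof -
  have "prod f A = prod f (A - B) * prod f B"
    using prod.subset_diff[OF assms(2,1)] .
  moreover have "0 \<le> prod f (A - B)" "prod f (A - B) \<le> 1" "0 \<le> prod f B"
    using assms by (auto intro: prod_le_1 prod_nonneg)
  ultimately show ?thesis
    by (simp add: mult_left_le_one_le)
qed

lemma prod_ratio_primes_ge:
  assumes "\<forall>r\<in>S. prime r \<and> 2 < r \<and> r \<le> p" "3 \<le> c" "c \<le> p + 1"
  shows "(\<Prod>x\<in>{x\<in>{3..<c}. prime x}. real x / (real x + 1)) * (real c / (real p + 1))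
    \<le> (\<Prod>r\<in>S. real r / (real r + 1))"
proof -
  let ?g = "\<lambda>x::nat. real x / (real x + 1)"
  let ?P = "\<lambda>a b. {x\<in>{a..<b}. prime x}"
  have unit: "0 \<le> ?g x \<and> ?g x \<le> 1" for x
    by auto
  have "real c / (real p + 1) = prod ?g {c..<p + 1}"
    using prod_ratio_telescope[of c "p + 1"] assms by simp
  also have "\<dots> \<le> prod ?g (?P c (p + 1))"
    using unit by (intro prod_le_prod_subset) auto
  finally have "prod ?g (?P 3 c) * (real c / (real p + 1)) \<le> prod ?g (?P 3 c) * prod ?g (?P c (p + 1))"
    by (intro mult_left_mono prod_nonneg) auto
  also have "\<dots> = prod ?g (?P 3 (p + 1))"
    using assms by (subst prod.union_disjoint[symmetric]) (auto intro!: prod.cong)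
  also have "\<dots> \<le> prod ?g S"
    using assms(1) unit by (intro prod_le_prod_subset) (auto simp: Suc_le_eq)
  finally show ?thesis .
qed

section \<open>The constant \<open>h'(12)\<close>\<close>

lemma q_Suc_eqI:
  assumes "q i = a" "1 \<le> i" "prime b" "a < b" "\<forall>y\<in>{Suc a..<b}. \<not> prime y"
  shows "q (Suc i) = b"
proof -
  obtain j where j: "i = Suc j"
    using assms(2) by (cases i) auto
  have "q (Suc i) = (LEAST s. prime s \<and> a < s)"
    using enumerate_Suc''[OF primes_infinite, of j] assms(1) unfolding q_def j by simp
  also have "\<dots> = b"
    using assms(3-5) by (intro Least_equality) (auto simp: not_less_eq_eq[symmetric])
  finally show ?thesis .
qed

lemma q_values:
  "q 2 = 3" "q 3 = 5" "q 4 = 7" "q 5 = 11" "q 6 = 13" "q 7 = 17" "q 8 = 19" "q 9 = 23"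
  "q 10 = 29" "q 11 = 31" "q 12 = 37"
proof -
  note eval = atLeastLessThan_nat_numeral prime_nat_iff'
  have 1: "q 1 = 2"
    unfolding q_def by (simp add: enumerate_0 Least_equality prime_ge_2_nat)
  have "q (Suc 1) = 3" using q_Suc_eqI[OF 1, of 3] by (simp add: eval)
  then have 2: "q 2 = 3" by (simp add: numeral_2_eq_2)
  have 3: "q 3 = 5" using q_Suc_eqI[OF 2, of 5] by (simp add: eval)
  have 4: "q 4 = 7" using q_Suc_eqI[OF 3, of 7] by (simp add: eval)
  have 5: "q 5 = 11" using q_Suc_eqI[OF 4, of 11] by (simp add: eval)
  have 6: "q 6 = 13" using q_Suc_eqI[OF 5, of 13] by (simp add: eval)
  have 7: "q 7 = 17" using q_Suc_eqI[OF 6, of 17] by (simp add: eval)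
  have 8: "q 8 = 19" using q_Suc_eqI[OF 7, of 19] by (simp add: eval)
  have 9: "q 9 = 23" using q_Suc_eqI[OF 8, of 23] by (simp add: eval)
  have 10: "q 10 = 29" using q_Suc_eqI[OF 9, of 29] by (simp add: eval)
  have 11: "q 11 = 31" using q_Suc_eqI[OF 10, of 31] by (simp add: eval)
  have 12: "q 12 = 37" using q_Suc_eqI[OF 11, of 37] by (simp add: eval)
  show "q 2 = 3" "q 3 = 5" "q 4 = 7" "q 5 = 11" "q 6 = 13" "q 7 = 17" "q 8 = 19" "q 9 = 23"
    "q 10 = 29" "q 11 = 31" "q 12 = 37" by fact+
qed

lemma odd_primes_below_37:
  "{x\<in>{3..<37::nat}. prime x} = {3, 5, 7, 11, 13, 17, 19, 23, 29, 31}"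
proof -
  have range: "{3..<37::nat} = {36, 35, 34, 33, 32, 31, 30, 29, 28, 27, 26, 25, 24, 23, 22, 21,
      20, 19, 18, 17, 16, 15, 14, 13, 12, 11, 10, 9, 8, 7, 6, 5, 4, 3}"
    by (simp add: atLeastLessThan_nat_numeral)
  show ?thesis
  proof (intro Set.set_eqI iffI)
    fix x assume "x \<in> {x\<in>{3..<37::nat}. prime x}"
    then have "x \<in> {3..<37}" "prime x" by auto
    then show "x \<in> {3, 5, 7, 11, 13, 17, 19, 23, 29, 31}"
      unfolding range
      by (elim insertE emptyE) (simp_all add: prime_nat_iff' atLeastLessThan_nat_numeral)
  next
    fix x assume "x \<in> {3, 5, 7, 11, 13, 17, 19, 23, 29, 31::nat}"
    then show "x \<in> {x\<in>{3..<37::nat}. prime x}"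
      by (elim insertE emptyE) (simp_all add: prime_nat_iff' atLeastLessThan_nat_numeral)
  qed
qed

lemma h'_12:
  "h' 12 = 37 * (\<Prod>x\<in>{x\<in>{3..<37::nat}. prime x}. real x / (real x + 1))"
proof -
  have indices: "{2..11::nat} = {11, 10, 9, 8, 7, 6, 5, 4, 3, 2}"
    by (simp add: atLeastLessThanSuc_atLeastAtMost[symmetric] atLeastLessThan_nat_numeral)
  have "h' 12 = f' 11 * real (q 12)"
    by (simp add: h'_def)
  also have "f' 11 = (\<Prod>i\<in>{2..11}. real (q i) / (real (q i) + 1))"
    by (simp add: f'_def)
  finally show ?thesis
    unfolding indices odd_primes_below_37 by (simp add: q_values)
qed

theorem lemma2p4:
  fixes n p :: nat
  assumes "n > 0"
    and "\<forall>r \<in> prime_factors n. r > 2"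
    and "p \<in> prime_factors n" and "\<forall>r \<in> prime_factors n. r \<le> p"
    and "p \<ge> 37"
  shows "real (psi (cyclic_group_C n)) \<ge> h' 12 * (real n)^2 / (real p + 1)"
proof -
  have "\<forall>r\<in>prime_factors n. prime r \<and> 2 < r \<and> r \<le> p"
    using assms(2,4) by auto
  from prod_ratio_primes_ge[OF this, of 37]
  have product: "h' 12 / (real p + 1) \<le> (\<Prod>r\<in>prime_factors n. real r / (real r + 1))"
    using assms(5) by (simp add: h'_12 mult.commute)
  have "h' 12 * (real n)^2 / (real p + 1) = real n ^ 2 * (h' 12 / (real p + 1))"
    by simp
  also have "\<dots> \<le> real n ^ 2 * (\<Prod>r\<in>prime_factors n. real r / (real r + 1))"
    using product by (rule mult_left_mono) simp
  also have "\<dots> \<le> real (psi (cyclic_group_C n))"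
    using cyclic_order_sum_ge[OF assms(1)] psi_integer_mod_group[OF assms(1)] by simp
  finally show ?thesis .
qed

end
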